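(* Let $G$ be a complete edge-colored permutation graph. Then for each strong module $M$ of $G$, the quotient graph $G[M]/\mathbb{P}_{\max}(M)$ is a complete edge-colored permutation graph.
   Context: A complete $k$-edge-colored graph $G=(V,E_1,\dots,E_k)$ is the complete graph on a finite set $V$ whose edges are partitioned into $k$ nonempty color classes $E_i$ (the one-vertex graph also counts); $G_{|i}=(V,E_i)$. A labeling is a bijection $\ell:V\to\{1,\dots,|V|\}$. A graph $(V,E)$ with labeling $\ell$ is a simple permutation graph of a permutation $\pi$ if for all $u,v$ with $\ell(u)>\ell(v)$: $\{u,v\}\in E$ iff $\pi^{-1}(\ell(u))<\pi^{-1}(\ell(v))$. $G$ is a complete edge-colored permutation graph if there exist a labeling $\ell$ and permutations $\pi_1,\dots,\pi_k$ with $(G_{|i},\ell)$ a simple permutation graph of $\pi_i$ for all $i$. A module is a set $M\subseteq V$ such that for every $v\notin M$ all edges $\{u,v\}$, $u\in M$, have the same color; a strong module is a nonempty module not overlapping (i.e., comparable by inclusion or disjoint with) any other module. For a strong module $M$ with $|M|\ge2$, $\mathbb{P}_{\max}(M)$ is the set of inclusion-maximal strong modules properly contained in $M$ (a partition of $M$), and $G[M]/\mathbb{P}_{\max}(M)$ is the complete graph on $\mathbb{P}_{\max}(M)$ where $\{M_a,M_b\}$ has the common color of all edges between $M_a$ and $M_b$; for $|M|=1$ the quotient is the one-vertex graph. *)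

theory Defs
  imports Main
begin

text \<open>The colour classes
  E_i are the (nonempty) fibres of col over the colours actually used, so k is the
  number of used colours; the one-vertex graph (k = 0) is included.\<close>

definition complete_ec_graph :: "'a set \<Rightarrow> ('a \<Rightarrow> 'a \<Rightarrow> 'c) \<Rightarrow> bool" where
  "complete_ec_graph V col \<longleftrightarrow> finite V \<and> V \<noteq> {} \<and>
     (\<forall>u\<in>V. \<forall>v\<in>V. u \<noteq> v \<longrightarrow> col u v = col v u)"

definition used_colors :: "'a set \<Rightarrow> ('a \<Rightarrow> 'a \<Rightarrow> 'c) \<Rightarrow> 'c set" where
  "used_colors V col = {col u v | u v. u \<in> V \<and> v \<in> V \<and> u \<noteq> v}"

definition labeling :: "'a set \<Rightarrow> ('a \<Rightarrow> nat) \<Rightarrow> bool" where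
  "labeling V lab \<longleftrightarrow> bij_betw lab V {1..card V}"

definition simple_perm_graph ::
    "'a set \<Rightarrow> ('a \<Rightarrow> 'a \<Rightarrow> bool) \<Rightarrow> ('a \<Rightarrow> nat) \<Rightarrow> (nat \<Rightarrow> nat) \<Rightarrow> bool" where
  "simple_perm_graph V E lab \<pi> \<longleftrightarrow> bij_betw \<pi> {1..card V} {1..card V} \<and>
     (\<forall>u\<in>V. \<forall>v\<in>V. lab u > lab v \<longrightarrow>
        (E u v \<longleftrightarrow> inv_into {1..card V} \<pi> (lab u) < inv_into {1..card V} \<pi> (lab v)))"

definition complete_ec_perm_graph :: "'a set \<Rightarrow> ('a \<Rightarrow> 'a \<Rightarrow> 'c) \<Rightarrow> bool" where
  "complete_ec_perm_graph V col \<longleftrightarrow> complete_ec_graph V col \<and>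
     (\<exists>lab. labeling V lab \<and>
        (\<forall>i\<in>used_colors V col. \<exists>\<pi>. simple_perm_graph V (\<lambda>u v. col u v = i) lab \<pi>))"

definition is_module :: "'a set \<Rightarrow> ('a \<Rightarrow> 'a \<Rightarrow> 'c) \<Rightarrow> 'a set \<Rightarrow> bool" where
  "is_module V col M \<longleftrightarrow> M \<subseteq> V \<and>
     (\<forall>v\<in>V - M. \<forall>u\<in>M. \<forall>u'\<in>M. col u v = col u' v)"

definition strong_module :: "'a set \<Rightarrow> ('a \<Rightarrow> 'a \<Rightarrow> 'c) \<Rightarrow> 'a set \<Rightarrow> bool" where
  "strong_module V col M \<longleftrightarrow> is_module V col M \<and> M \<noteq> {} \<and>
     (\<forall>M'. is_module V col M' \<longrightarrow> M \<subseteq> M' \<or> M' \<subseteq> M \<or> M \<inter> M' = {})"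

definition Pmax :: "'a set \<Rightarrow> ('a \<Rightarrow> 'a \<Rightarrow> 'c) \<Rightarrow> 'a set \<Rightarrow> 'a set set" where
  "Pmax V col M = {M'. strong_module V col M' \<and> M' \<subset> M \<and>
     (\<forall>M''. strong_module V col M'' \<and> M'' \<subset> M \<longrightarrow> \<not> M' \<subset> M'')}"

definition quotient_vertices :: "'a set \<Rightarrow> ('a \<Rightarrow> 'a \<Rightarrow> 'c) \<Rightarrow> 'a set \<Rightarrow> 'a set set" where
  "quotient_vertices V col M = (if card M \<ge> 2 then Pmax V col M else {M})"

text \<open>Colour of {Ma, Mb} in the quotient: the (common) colour of the edges between Ma and Mb.\<close>
definition quotient_col :: "('a \<Rightarrow> 'a \<Rightarrow> 'c) \<Rightarrow> 'a set \<Rightarrow> 'a set \<Rightarrow> 'c" where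
  "quotient_col col A B = col (SOME a. a \<in> A) (SOME b. b \<in> B)"

end

theory Submission
  imports Defs
begin

text \<open>The blocks of \<open>\<bbbP>\<^sub>m\<^sub>a\<^sub>x(M)\<close> are pairwise disjoint and nonempty, and the colour
  between two blocks is read off at chosen representatives. Hence the quotient is (isomorphic to)
  the subgraph of \<open>G\<close> induced by one representative per block, and an induced subgraph of a
  complete edge-coloured permutation graph is again one: restrict the labeling and all the
  permutations to the representatives and renumber them by rank.\<close>

definition rank_on :: "'b set \<Rightarrow> ('b \<Rightarrow> nat) \<Rightarrow> 'b \<Rightarrow> nat" where
  "rank_on S f x = card {y \<in> S. f y \<le> f x}"

lemma rank_on_strict_mono:
  assumes "finite S" "y \<in> S" "f x < f y"
  shows "rank_on S f x < rank_on S f y"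
proof -
  have "{z \<in> S. f z \<le> f x} \<subseteq> {z \<in> S. f z \<le> f y}"
    using assms(3) by auto
  moreover have "y \<in> {z \<in> S. f z \<le> f y} - {z \<in> S. f z \<le> f x}"
    using assms(2,3) by auto
  ultimately have "{z \<in> S. f z \<le> f x} \<subset> {z \<in> S. f z \<le> f y}"
    by blast
  then show ?thesis
    unfolding rank_on_def by (rule psubset_card_mono[rotated]) (use assms(1) in simp)
qed

lemma rank_on_less_iff:
  assumes "finite S" "x \<in> S" "y \<in> S"
  shows "rank_on S f x < rank_on S f y \<longleftrightarrow> f x < f y"
proof
  assume less: "rank_on S f x < rank_on S f y"
  show "f x < f y"
  proof (rule ccontr)
    assume "\<not> f x < f y"
    then have "{z \<in> S. f z \<le> f y} \<subseteq> {z \<in> S. f z \<le> f x}" by auto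
    then have "rank_on S f y \<le> rank_on S f x"
      unfolding rank_on_def using assms(1) by (intro card_mono) auto
    with less show False by simp
  qed
qed (rule rank_on_strict_mono[OF assms(1,3)])

lemma bij_betw_rank_on:
  assumes "finite S" "inj_on f S"
  shows "bij_betw (rank_on S f) S {1..card S}"
proof -
  have inj: "inj_on (rank_on S f) S"
  proof (rule inj_onI)
    fix x y assume xy: "x \<in> S" "y \<in> S" "rank_on S f x = rank_on S f y"
    have "\<not> f x < f y" "\<not> f y < f x"
      using rank_on_less_iff[OF assms(1) xy(1,2), of f] rank_on_less_iff[OF assms(1) xy(2,1), of f] xy(3)
      by simp_all
    then have "f x = f y" by simp
    then show "x = y" using xy(1,2) assms(2) by (simp add: inj_on_eq_iff)
  qed
  have "rank_on S f ` S \<subseteq> {1..card S}"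
  proof
    fix k assume "k \<in> rank_on S f ` S"
    then obtain x where x: "x \<in> S" "k = rank_on S f x" by auto
    have "x \<in> {y \<in> S. f y \<le> f x}" using x(1) by simp
    then have "0 < card {y \<in> S. f y \<le> f x}"
      using assms(1) by (simp add: card_gt_0_iff) blast
    moreover have "card {y \<in> S. f y \<le> f x} \<le> card S"
      using assms(1) by (intro card_mono) auto
    ultimately show "k \<in> {1..card S}" unfolding x rank_on_def by simp
  qed
  moreover have "card (rank_on S f ` S) = card {1..card S}"
    using card_image[OF inj] by simp
  ultimately have "rank_on S f ` S = {1..card S}"
    by (rule card_subset_eq[OF finite_atLeastAtMost])
  with inj show ?thesis unfolding bij_betw_def by blast
qed

text \<open>The permutation \<open>\<pi>\<close> only enters through the position \<open>\<pi>\<^sup>-\<^sup>1 \<circ> \<ell>\<close>, so a simple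
  permutation graph is the same as a second numbering of the vertices that reverses exactly the
  edges.\<close>

lemma ex_simple_perm_graph_iff_position:
  assumes "labeling V lab"
  shows "(\<exists>\<pi>. simple_perm_graph V E lab \<pi>) \<longleftrightarrow>
    (\<exists>pos. bij_betw pos V {1..card V} \<and>
       (\<forall>u\<in>V. \<forall>v\<in>V. lab u > lab v \<longrightarrow> (E u v \<longleftrightarrow> pos u < pos v)))"
  (is "?perm \<longleftrightarrow> ?numbering")
proof -
  have lab: "bij_betw lab V {1..card V}" using assms unfolding labeling_def .
  show ?thesis
  proof
    assume ?perm
    then obtain \<pi> where \<pi>: "simple_perm_graph V E lab \<pi>" ..
    let ?pos = "inv_into {1..card V} \<pi> \<circ> lab"
    have "bij_betw ?pos V {1..card V}"
      using \<pi> lab unfolding simple_perm_graph_def by (metis bij_betw_inv_into bij_betw_trans)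
    moreover have "\<forall>u\<in>V. \<forall>v\<in>V. lab u > lab v \<longrightarrow> (E u v \<longleftrightarrow> ?pos u < ?pos v)"
      using \<pi> unfolding simple_perm_graph_def by simp
    ultimately show ?numbering by blast
  next
    assume ?numbering
    then obtain pos where pos: "bij_betw pos V {1..card V}"
      and edges: "\<forall>u\<in>V. \<forall>v\<in>V. lab u > lab v \<longrightarrow> (E u v \<longleftrightarrow> pos u < pos v)"
      by blast
    define \<pi> where "\<pi> = lab \<circ> inv_into V pos"
    have \<pi>: "bij_betw \<pi> {1..card V} {1..card V}"
      unfolding \<pi>_def by (rule bij_betw_trans[OF bij_betw_inv_into[OF pos] lab])
    have "inv_into {1..card V} \<pi> (lab u) = pos u" if "u \<in> V" for u
    proof -
      have "\<pi> (pos u) = lab u"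
        unfolding \<pi>_def using that pos by (simp add: bij_betw_def)
      moreover have "pos u \<in> {1..card V}" using that pos bij_betwE by blast
      ultimately show ?thesis using \<pi> by (metis bij_betw_def inv_into_f_f)
    qed
    then have "simple_perm_graph V E lab \<pi>"
      unfolding simple_perm_graph_def using \<pi> edges by simp
    then show ?perm by blast
  qed
qed

lemma labeling_pullback:
  assumes "labeling V lab" "finite P" "inj_on r P" "r ` P \<subseteq> V"
  shows "labeling P (rank_on P (lab \<circ> r))"
proof -
  have "inj_on (lab \<circ> r) P"
    using assms unfolding labeling_def bij_betw_def by (blast intro: comp_inj_on inj_on_subset)
  then show ?thesis unfolding labeling_def by (rule bij_betw_rank_on[OF assms(2)])
qed

lemma ex_simple_perm_graph_pullback:
  assumes "labeling V lab" "\<exists>\<pi>. simple_perm_graph V E lab \<pi>"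
    and "finite P" "inj_on r P" "r ` P \<subseteq> V"
  shows "\<exists>\<pi>. simple_perm_graph P (\<lambda>A B. E (r A) (r B)) (rank_on P (lab \<circ> r)) \<pi>"
proof -
  have lab': "labeling P (rank_on P (lab \<circ> r))"
    by (rule labeling_pullback[OF assms(1,3-5)])
  obtain pos where pos: "bij_betw pos V {1..card V}"
    and edges: "\<forall>u\<in>V. \<forall>v\<in>V. lab u > lab v \<longrightarrow> (E u v \<longleftrightarrow> pos u < pos v)"
    using assms(2) unfolding ex_simple_perm_graph_iff_position[OF assms(1)] by blast
  let ?pos' = "rank_on P (pos \<circ> r)"
  have "inj_on (pos \<circ> r) P"
    using pos assms(4,5) unfolding bij_betw_def by (blast intro: comp_inj_on inj_on_subset)
  then have "bij_betw ?pos' P {1..card P}"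
    by (rule bij_betw_rank_on[OF assms(3)])
  moreover have "E (r A) (r B) \<longleftrightarrow> ?pos' A < ?pos' B"
    if AB: "A \<in> P" "B \<in> P" "rank_on P (lab \<circ> r) A > rank_on P (lab \<circ> r) B" for A B
  proof -
    have "lab (r A) > lab (r B)"
      using AB(3) rank_on_less_iff[OF assms(3) AB(2,1), of "lab \<circ> r"] by simp
    moreover have "r A \<in> V" "r B \<in> V" using AB(1,2) assms(5) by auto
    ultimately have "E (r A) (r B) \<longleftrightarrow> pos (r A) < pos (r B)" using edges by blast
    then show ?thesis using rank_on_less_iff[OF assms(3) AB(1,2), of "pos \<circ> r"] by simp
  qed
  ultimately show ?thesis
    unfolding ex_simple_perm_graph_iff_position[OF lab'] by blast
qed

lemma complete_ec_graph_pullback: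
  assumes "complete_ec_graph V col" "finite P" "P \<noteq> {}" "inj_on r P" "r ` P \<subseteq> V"
  shows "complete_ec_graph P (\<lambda>A B. col (r A) (r B))"
  using assms unfolding complete_ec_graph_def by (simp add: image_subset_iff inj_on_eq_iff)

lemma used_colors_pullback:
  assumes "inj_on r P" "r ` P \<subseteq> V"
  shows "used_colors P (\<lambda>A B. col (r A) (r B)) \<subseteq> used_colors V col"
  using assms unfolding used_colors_def by (fastforce simp: image_subset_iff inj_on_eq_iff)

lemma complete_ec_perm_graph_pullback:
  assumes G: "complete_ec_perm_graph V col"
    and "finite P" "P \<noteq> {}" "inj_on r P" "r ` P \<subseteq> V"
  shows "complete_ec_perm_graph P (\<lambda>A B. col (r A) (r B))"
proof -
  obtain lab where lab: "labeling V lab"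
    and perm: "\<forall>i\<in>used_colors V col. \<exists>\<pi>. simple_perm_graph V (\<lambda>u v. col u v = i) lab \<pi>"
    using G unfolding complete_ec_perm_graph_def by blast
  have "complete_ec_graph P (\<lambda>A B. col (r A) (r B))"
    using G assms(2-5) unfolding complete_ec_perm_graph_def
    by (blast intro: complete_ec_graph_pullback)
  moreover have "labeling P (rank_on P (lab \<circ> r))"
    by (rule labeling_pullback[OF lab assms(2,4,5)])
  moreover have "\<exists>\<pi>. simple_perm_graph P (\<lambda>A B. col (r A) (r B) = i) (rank_on P (lab \<circ> r)) \<pi>"
    if "i \<in> used_colors P (\<lambda>A B. col (r A) (r B))" for i
  proof -
    have "i \<in> used_colors V col" using that used_colors_pullback[OF assms(4,5), of col] by blast
    with perm show ?thesis by (intro ex_simple_perm_graph_pullback[OF lab _ assms(2,4,5)]) blast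
  qed
  ultimately show ?thesis unfolding complete_ec_perm_graph_def by blast
qed

lemma inj_on_some_elem:
  assumes "pairwise disjnt Q" "{} \<notin> Q"
  shows "inj_on (\<lambda>A. SOME a. a \<in> A) Q"
proof (rule inj_onI)
  fix A B assume AB: "A \<in> Q" "B \<in> Q" "(SOME a. a \<in> A) = (SOME b. b \<in> B)"
  have "A \<noteq> {}" "B \<noteq> {}" using AB(1,2) assms(2) by auto
  then have "(SOME a. a \<in> A) \<in> A" "(SOME b. b \<in> B) \<in> B"
    by (simp_all add: some_in_eq)
  then have "\<not> disjnt A B"
    using AB(3) unfolding disjnt_def by (metis IntI empty_iff)
  then show "A = B"
    using AB(1,2) assms(1) by (meson pairwiseD)
qed

lemma strong_module_singleton:
  assumes "v \<in> V"
  shows "strong_module V col {v}"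
  using assms unfolding strong_module_def is_module_def by auto

lemma Pmax_subset:
  assumes "A \<in> Pmax V col M"
  shows "strong_module V col A" "A \<subset> M"
  using assms unfolding Pmax_def by auto

lemma strong_module_is_module: "strong_module V col A \<Longrightarrow> is_module V col A"
  unfolding strong_module_def by blast

lemma strong_module_not_overlapping:
  assumes "strong_module V col A" "is_module V col B"
  shows "A \<subseteq> B \<or> B \<subseteq> A \<or> A \<inter> B = {}"
  using assms unfolding strong_module_def by blast

lemma Pmax_pairwise_disjnt: "pairwise disjnt (Pmax V col M)"
proof (rule pairwiseI)
  fix A B assume A: "A \<in> Pmax V col M" and B: "B \<in> Pmax V col M" and "A \<noteq> B"
  have "A \<subseteq> B \<or> B \<subseteq> A \<or> A \<inter> B = {}"
    using Pmax_subset(1)[OF A] strong_module_is_module[OF Pmax_subset(1)[OF B]]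
    by (rule strong_module_not_overlapping)
  moreover have "\<not> A \<subset> B" "\<not> B \<subset> A"
    using A B Pmax_subset[OF A] Pmax_subset[OF B] unfolding Pmax_def by blast+
  ultimately show "disjnt A B" using \<open>A \<noteq> B\<close> unfolding disjnt_def by blast
qed

text \<open>Every singleton \<open>{v} \<subset> M\<close> is a strong module, so a maximal proper strong submodule exists.\<close>

lemma Pmax_nonempty:
  assumes "finite V" "M \<subseteq> V" "card M \<ge> 2"
  shows "Pmax V col M \<noteq> {}"
proof -
  define S where "S = {A. strong_module V col A \<and> A \<subset> M}"
  have "M \<noteq> {}" using assms(3) by auto
  then obtain v where "v \<in> M" by blast
  moreover have "M \<noteq> {v}" using assms(3) by auto
  ultimately have "{v} \<in> S"
    unfolding S_def using assms(2) strong_module_singleton[of v V col] by auto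
  moreover have "finite S"
    unfolding S_def by (rule finite_subset[of _ "Pow V"]) (use assms(1,2) in auto)
  ultimately obtain m where "m \<in> S" "\<forall>b\<in>S. m \<le> b \<longrightarrow> m = b"
    by (metis empty_iff finite_has_maximal)
  then have "m \<in> Pmax V col M"
    unfolding S_def Pmax_def by auto
  then show ?thesis by blast
qed

lemma quotient_vertices_partition:
  assumes "finite V" "strong_module V col M"
  shows "finite (quotient_vertices V col M)" "quotient_vertices V col M \<noteq> {}"
    "pairwise disjnt (quotient_vertices V col M)" "{} \<notin> quotient_vertices V col M"
    "\<Union> (quotient_vertices V col M) \<subseteq> V"
proof -
  have M: "M \<subseteq> V" "M \<noteq> {}"
    using assms(2) unfolding strong_module_def is_module_def by auto
  have Pmax_Pow: "Pmax V col M \<subseteq> Pow V - {{}}"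
    using M(1) by (auto dest: Pmax_subset simp: strong_module_def)
  show "finite (quotient_vertices V col M)"
    using finite_subset[OF Pmax_Pow] assms(1)
    unfolding quotient_vertices_def by auto
  show "quotient_vertices V col M \<noteq> {}"
    using Pmax_nonempty[OF assms(1) M(1)] unfolding quotient_vertices_def by auto
  show "pairwise disjnt (quotient_vertices V col M)"
    using Pmax_pairwise_disjnt unfolding quotient_vertices_def by auto
  show "{} \<notin> quotient_vertices V col M" "\<Union> (quotient_vertices V col M) \<subseteq> V"
    using Pmax_Pow M unfolding quotient_vertices_def by auto
qed

theorem proposition4p4:
  fixes V :: "'a set" and col :: "'a \<Rightarrow> 'a \<Rightarrow> 'c" and M :: "'a set"
  assumes "complete_ec_perm_graph V col"
    and "strong_module V col M"
  shows "complete_ec_perm_graph (quotient_vertices V col M) (quotient_col col)"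
proof -
  let ?Q = "quotient_vertices V col M" and ?r = "\<lambda>A. SOME a. a \<in> A"
  have "finite V"
    using assms(1) unfolding complete_ec_perm_graph_def complete_ec_graph_def by blast
  note Q = quotient_vertices_partition[OF this assms(2)]
  have "?r A \<in> A" if "A \<in> ?Q" for A
    using that Q(4) some_in_eq[of A] by auto
  with Q(5) have "?r ` ?Q \<subseteq> V" by blast
  moreover have "quotient_col col = (\<lambda>A B. col (?r A) (?r B))"
    unfolding quotient_col_def ..
  ultimately show ?thesis
    using complete_ec_perm_graph_pullback[OF assms(1) Q(1,2) inj_on_some_elem[OF Q(3,4)]]
    by simp
qed

end
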